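(* Let $n\ge1$ and let $p$ be a strongly 312-avoiding permutation of $\{1,\dots,n\}$ with $p_n=1$. Then there is an integer $k$ with $1\le k\le n$ such that $p=(k+1)(k+2)\cdots n\;k(k-1)\cdots 2\,1$.
   Context: Permutations are written in one-line notation $p=p_1\cdots p_n$ with $p_i=p(i)$. $p$ contains a pattern $q=q_1\cdots q_m$ if there are indices $i_1<\cdots<i_m$ with $p_{i_r}<p_{i_s}$ iff $q_r<q_s$; otherwise $p$ avoids $q$. $p^2(i)=p(p(i))$. A permutation $p$ is strongly $q$-avoiding if both $p$ and $p^2$ avoid $q$. *)

theory Defs
  imports "HOL-Combinatorics.Permutations"
begin

text \<open>A permutation of {1..n} is a function p :: nat => nat with p permutes {1..n};
  its one-line notation is p 1, ..., p n. A pattern q = q_1 ... q_m is given as a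
  list of naturals (q_{r+1} = q ! r).\<close>

definition contains_pattern :: "nat \<Rightarrow> (nat \<Rightarrow> nat) \<Rightarrow> nat list \<Rightarrow> bool" where
  "contains_pattern n p q \<longleftrightarrow>
     (\<exists>idx :: nat \<Rightarrow> nat.
        (\<forall>r < length q. 1 \<le> idx r \<and> idx r \<le> n) \<and>
        (\<forall>r s. r < s \<and> s < length q \<longrightarrow> idx r < idx s) \<and>
        (\<forall>r < length q. \<forall>s < length q. p (idx r) < p (idx s) \<longleftrightarrow> q ! r < q ! s))"

definition avoids_pattern :: "nat \<Rightarrow> (nat \<Rightarrow> nat) \<Rightarrow> nat list \<Rightarrow> bool" where
  "avoids_pattern n p q \<longleftrightarrow> \<not> contains_pattern n p q"

definition strongly_avoids :: "nat \<Rightarrow> (nat \<Rightarrow> nat) \<Rightarrow> nat list \<Rightarrow> bool" where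
  "strongly_avoids n p q \<longleftrightarrow> avoids_pattern n p q \<and> avoids_pattern n (p \<circ> p) q"

end

theory Submission
  imports Defs
begin

text \<open>Let m be the position of n. Avoiding 312 forces p to decrease after m. The square
  q = p \<circ> p has its minimum q m = p n = 1 at m, so avoiding 312 puts every q-value before m
  below every q-value after m; hence q maps {1..m} onto itself and, as q n = p 1, p 1 > m.
  From this, every value p i with i \<le> m exceeds m and even n - m, so the decreasing tail
  takes exactly the values n - m, \<dots>, 1. Consequently q reverses the prefix onto the
  last m positions, so a descent in the prefix would be a 312 in q: the prefix increases,
  and it is n - m + 1, \<dots>, n.\<close>

lemma permutes_bounds:
  fixes p :: "nat \<Rightarrow> nat"
  assumes "p permutes {1..n}" "1 \<le> x" "x \<le> n"
  shows "1 \<le> p x \<and> p x \<le> n"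
  using permutes_in_image[OF assms(1), of x] assms(2,3) by simp

lemma contains_312I:
  assumes "1 \<le> i" "i < j" "j < l" "l \<le> n" "f j < f l" "f l < f i"
  shows "contains_pattern n f [3, 1, 2]"
  unfolding contains_pattern_def
  by (rule exI[of _ "\<lambda>r. if r = 0 then i else if r = 1 then j else l"])
    (use assms in \<open>auto simp: less_Suc_eq numeral_3_eq_3 nth_Cons'\<close>)

lemma avoids_312_decreasing_after_max:
  assumes "\<not> contains_pattern n p [3, 1, 2]" "p permutes {1..n}" "p m = n"
    and "1 \<le> m" "m \<le> i" "i < j" "j \<le> n"
  shows "p j < p i"
proof (rule ccontr)
  assume "\<not> p j < p i"
  moreover have "p j \<le> n" using permutes_bounds[OF assms(2), of j] assms(4-7) by simp
  moreover have "p j \<noteq> p i" "p j \<noteq> p m"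
    using assms(5,6) permutes_inj[OF assms(2)] by (auto dest: injD)
  ultimately have "p i < p j" "p j < p m" using assms(3) by auto
  then show False using contains_312I[of m i j n p] assms by (cases "m = i") auto
qed

lemma avoids_312_min_separates:
  assumes "\<not> contains_pattern n p [3, 1, 2]" "p permutes {1..n}" "p m = 1"
    and "1 \<le> i" "i \<le> m" "m < l" "l \<le> n"
  shows "p i < p l"
proof (rule ccontr)
  assume "\<not> p i < p l"
  moreover have "1 \<le> p l" using permutes_bounds[OF assms(2), of l] assms(4-7) by simp
  moreover have "p l \<noteq> p i" "p l \<noteq> p m"
    using assms(5,6) permutes_inj[OF assms(2)] by (auto dest: injD)
  ultimately have "p l < p i" "p m < p l" using assms(3) by auto
  then show False using contains_312I[of i m l n p] assms by (cases "i = m") auto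
qed

lemma permutes_image_complement:
  assumes "p permutes S" "A \<subseteq> S" "p ` A \<subseteq> B" "finite B" "card B \<le> card A" "x \<in> S - A"
  shows "p x \<notin> B"
proof
  assume "p x \<in> B"
  have inj: "inj p" using assms(1) by (rule permutes_inj)
  then have "card (p ` A) = card A" by (simp add: card_image inj_on_subset)
  then have "p ` A = B" using assms(3-5) by (metis card_seteq)
  then obtain a where "a \<in> A" "p x = p a" using \<open>p x \<in> B\<close> by auto
  then show False using inj assms(6) by (auto dest: injD)
qed

lemma permutes_block_below:
  fixes p :: "nat \<Rightarrow> nat"
  assumes "p permutes {1..n}" "\<And>i l. 1 \<le> i \<Longrightarrow> i \<le> m \<Longrightarrow> m < l \<Longrightarrow> l \<le> n \<Longrightarrow> p i < p l"
    and "1 \<le> i" "i \<le> m"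
  shows "p i \<le> m"
proof (rule ccontr)
  assume "\<not> p i \<le> m"
  then have "i \<in> {1..n}" using assms(1,3,4) by (metis permutes_not_in)
  then have "p i \<le> n" using permutes_bounds[OF assms(1), of i] by simp
  have "p ` ({i} \<union> {m<..n}) \<subseteq> {m<..n}"
  proof
    fix y assume "y \<in> p ` ({i} \<union> {m<..n})"
    then obtain x where x: "x \<in> {i} \<union> {m<..n}" "y = p x" by blast
    have "p x \<le> n" if "x \<in> {m<..n}"
    proof -
      have "1 \<le> x" using that assms(3,4) by simp
      then show ?thesis using that permutes_bounds[OF assms(1), of x] by simp
    qed
    then show "y \<in> {m<..n}"
      using x \<open>\<not> p i \<le> m\<close> \<open>p i \<le> n\<close> assms(2)[of i x] assms(3,4) by auto
  qed
  moreover have "inj_on p ({i} \<union> {m<..n})"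
    by (rule inj_on_subset[OF permutes_inj[OF assms(1)] subset_UNIV])
  ultimately have "card ({i} \<union> {m<..n}) \<le> card {m<..n}"
    by (metis card_inj_on_le finite_greaterThanAtMost)
  then show False using assms(4) by simp
qed

lemma permutes_block_above:
  fixes p :: "nat \<Rightarrow> nat"
  assumes "p permutes {1..n}" "\<And>i l. 1 \<le> i \<Longrightarrow> i \<le> m \<Longrightarrow> m < l \<Longrightarrow> l \<le> n \<Longrightarrow> p i < p l"
    and "m \<le> n" "m < l" "l \<le> n"
  shows "m < p l"
proof -
  have "p ` {1..m} \<subseteq> {1..m}"
  proof (rule image_subsetI)
    fix x assume "x \<in> {1..m}"
    then have "x \<le> n" using assms(3) by simp
    then show "p x \<in> {1..m}"
      using \<open>x \<in> {1..m}\<close> permutes_block_below[OF assms(1), of m x, OF assms(2)]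
        permutes_bounds[OF assms(1), of x] by simp
  qed
  then have "p l \<notin> {1..m}"
    using permutes_image_complement[OF assms(1), of "{1..m}" "{1..m}" l] assms(3-5) by simp
  moreover have "p l \<in> {1..n}"
    using assms(4,5) permutes_in_image[OF assms(1), of l] by simp
  ultimately show ?thesis by auto
qed

lemma decreasing_gap:
  fixes f :: "nat \<Rightarrow> nat"
  assumes "\<And>x. a \<le> x \<Longrightarrow> x < b \<Longrightarrow> f (Suc x) < f x" "a \<le> i" "i \<le> j" "j \<le> b"
  shows "f j + (j - i) \<le> f i"
  using assms(3,4)
proof (induction j rule: dec_induct)
  case (step j)
  then show ?case using assms(1)[of j] assms(2) by simp
qed simp

lemma increasing_gap:
  fixes f :: "nat \<Rightarrow> nat"
  assumes "\<And>x. a \<le> x \<Longrightarrow> x < b \<Longrightarrow> f x < f (Suc x)" "a \<le> i" "i \<le> j" "j \<le> b"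
  shows "f i + (j - i) \<le> f j"
  using assms(3,4)
proof (induction j rule: dec_induct)
  case (step j)
  then show ?case using assms(1)[of j] assms(2) by simp
qed simp

locale strongly_312_avoiding_ending_in_one =
  fixes n m :: nat and p :: "nat \<Rightarrow> nat"
  assumes permutes: "p permutes {1..n}"
    and avoids: "\<not> contains_pattern n p [3, 1, 2]"
    and square_avoids: "\<not> contains_pattern n (p \<circ> p) [3, 1, 2]"
    and last: "p n = 1"
    and max_pos: "p m = n"
    and max_pos_bounds: "1 \<le> m" "m < n"
begin

lemma square_permutes: "(p \<circ> p) permutes {1..n}"
  by (rule permutes_compose[OF permutes permutes])

lemma bounds: "1 \<le> x \<Longrightarrow> x \<le> n \<Longrightarrow> 1 \<le> p x \<and> p x \<le> n"
  by (rule permutes_bounds[OF permutes])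

lemma eqD: "p x = p y \<Longrightarrow> x = y"
  using permutes_inj[OF permutes] by (auto dest: injD)

lemma preimage: "1 \<le> x \<Longrightarrow> x \<le> n \<Longrightarrow> \<exists>j. 1 \<le> j \<and> j \<le> n \<and> p j = x"
  using permutes_in_image[OF permutes_inv[OF permutes], of x] permutes_inverses(1)[OF permutes]
  by (intro exI[of _ "inv p x"]) simp

lemma decreasing_after_max_pos: "m \<le> x \<Longrightarrow> x < n \<Longrightarrow> p (Suc x) < p x"
  by (rule avoids_312_decreasing_after_max[OF avoids permutes max_pos max_pos_bounds(1)]) auto

lemma square_separates: "1 \<le> i \<Longrightarrow> i \<le> m \<Longrightarrow> m < l \<Longrightarrow> l \<le> n \<Longrightarrow> (p \<circ> p) i < (p \<circ> p) l"
  by (rule avoids_312_min_separates[OF square_avoids square_permutes]) (simp_all add: max_pos last)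

lemma square_prefix_le: "1 \<le> i \<Longrightarrow> i \<le> m \<Longrightarrow> p (p i) \<le> m"
  using permutes_block_below[OF square_permutes square_separates] by simp

lemma max_pos_less_first: "m < p 1"
proof -
  have "m < (p \<circ> p) n"
    by (rule permutes_block_above[OF square_permutes square_separates])
      (use max_pos_bounds in auto)
  then show ?thesis using last by simp
qed

lemma max_pos_less_prefix:
  assumes "1 \<le> i" "i \<le> m"
  shows "m < p i"
proof (rule ccontr)
  assume "\<not> m < p i"
  have square_ne_max: "p (p x) \<noteq> n" if "1 \<le> x" "x \<le> m" for x
    using square_prefix_le[OF that] max_pos_bounds by simp
  obtain j where j: "1 \<le> j" "j \<le> n" "p j = m"
    using preimage[of m] max_pos_bounds by auto
  have "m < j"
  proof (rule ccontr)
    assume "\<not> m < j"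
    then show False using square_ne_max[of j] j max_pos by simp
  qed
  have "p i \<noteq> m" using square_ne_max[OF assms] max_pos by auto
  then have "p i < p j" using \<open>\<not> m < p i\<close> j(3) by simp
  moreover have "1 < i" using max_pos_less_first \<open>\<not> m < p i\<close> assms(1) by (cases "i = 1") auto
  ultimately have "contains_pattern n p [3, 1, 2]"
    using max_pos_less_first j assms(2) \<open>m < j\<close> by (intro contains_312I[of 1 i j]) auto
  then show False using avoids by simp
qed

lemma prefix_gt:
  assumes "1 \<le> i" "i \<le> m"
  shows "n - m < p i"
proof (rule ccontr)
  assume "\<not> n - m < p i"
  have "m < p i" "p i \<le> n" using max_pos_less_prefix[OF assms] bounds assms max_pos_bounds by auto
  then have "p n + (n - p i) \<le> p (p i)"
    using decreasing_gap[of m n p, OF decreasing_after_max_pos] by simp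
  then show False using square_prefix_le[OF assms] last \<open>\<not> n - m < p i\<close> max_pos_bounds
    by simp
qed

lemma suffix_le:
  assumes "m < l" "l \<le> n"
  shows "p l \<le> n - m"
proof -
  have "p ` {1..m} \<subseteq> {n - m<..n}"
    using prefix_gt bounds max_pos_bounds by auto
  then have "p l \<notin> {n - m<..n}"
    using permutes_image_complement[OF permutes, of "{1..m}" "{n - m<..n}" l] assms max_pos_bounds by simp
  then show ?thesis using bounds[of l] assms max_pos_bounds by simp
qed

lemma max_pos_le_half: "m \<le> n - m"
proof -
  obtain j where j: "1 \<le> j" "j \<le> n" "p j = m"
    using preimage[of m] max_pos_bounds by auto
  then have "m < j" using max_pos_less_prefix[of j] by (metis less_irrefl not_le)
  then show ?thesis using suffix_le[of j] j by simp
qed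

lemma suffix_eq:
  assumes "m < l" "l \<le> n"
  shows "p l + l = n + 1"
proof -
  have "p n + (n - l) \<le> p l" "p l + (l - Suc m) \<le> p (Suc m)"
    using decreasing_gap[of m n p, OF decreasing_after_max_pos] assms by simp_all
  then show ?thesis using suffix_le[of "Suc m"] last assms max_pos_bounds by simp
qed

lemma square_suffix_reverses:
  assumes "1 \<le> j" "j \<le> m"
  shows "(p \<circ> p) (n + 1 - j) = p j"
proof -
  have "m < n + 1 - j" "n + 1 - j \<le> n" using assms max_pos_le_half by auto
  then have "p (n + 1 - j) = j" using suffix_eq by fastforce
  then show ?thesis by simp
qed

lemma prefix_increasing:
  assumes "1 \<le> i" "i < m"
  shows "p i < p (Suc i)"
proof (rule ccontr)
  assume "\<not> p i < p (Suc i)"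
  moreover have "p (Suc i) \<noteq> p i" using eqD[of "Suc i" i] by auto
  ultimately have descent: "p (Suc i) < p i" by simp
  have "p i \<noteq> p m" using eqD[of i m] assms(2) by auto
  then have "p i < n" using bounds[of i] assms max_pos max_pos_bounds by auto
  then have "Suc i < m" using descent assms(2) max_pos by (cases "Suc i = m") auto
  have "(p \<circ> p) (n + 1 - m) = n" "(p \<circ> p) (n + 1 - Suc i) = p (Suc i)"
    "(p \<circ> p) (n + 1 - i) = p i"
    using square_suffix_reverses[of m] square_suffix_reverses[of "Suc i"]
      square_suffix_reverses[of i] assms \<open>Suc i < m\<close> max_pos max_pos_bounds by simp_all
  then have "contains_pattern n (p \<circ> p) [3, 1, 2]"
    using descent \<open>p i < n\<close> \<open>Suc i < m\<close> assms max_pos_bounds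
    by (intro contains_312I[of "n + 1 - m" "n + 1 - Suc i" "n + 1 - i"]) simp_all
  then show False using square_avoids by simp
qed

lemma prefix_eq:
  assumes "1 \<le> i" "i \<le> m"
  shows "p i = n - m + i"
proof -
  have "p 1 + (i - 1) \<le> p i" "p i + (m - i) \<le> p m"
    using increasing_gap[of 1 m p, OF prefix_increasing] assms by simp_all
  then show ?thesis using prefix_gt[of 1] max_pos max_pos_bounds assms by simp
qed

end

theorem lemma3p6:
  fixes n :: nat and p :: "nat \<Rightarrow> nat"
  assumes "n \<ge> 1"
    and "p permutes {1..n}"
    and "strongly_avoids n p [3, 1, 2]"
    and "p n = 1"
  shows "\<exists>k. 1 \<le> k \<and> k \<le> n \<and>
           (\<forall>j \<in> {1..n}. p j = (if j \<le> n - k then k + j else n + 1 - j))"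
proof (cases "n = 1")
  case True
  then show ?thesis using assms(4) by (intro exI[of _ 1]) auto
next
  case False
  define m where "m = inv p n"
  have "m \<in> {1..n}" "p m = n"
    using assms(1,2) permutes_inverses(1)[OF assms(2)] permutes_in_image[OF permutes_inv[OF assms(2)]]
    by (simp_all add: m_def)
  moreover have "m \<noteq> n" using \<open>p m = n\<close> assms(4) False by auto
  ultimately interpret strongly_312_avoiding_ending_in_one n m p
    using assms(2-4) by unfold_locales (auto simp: strongly_avoids_def avoids_pattern_def)
  show ?thesis
  proof (intro exI[of _ "n - m"] conjI ballI)
    show "1 \<le> n - m" "n - m \<le> n" using max_pos_bounds by auto
    fix j assume "j \<in> {1..n}"
    then show "p j = (if j \<le> n - (n - m) then n - m + j else n + 1 - j)"
      using prefix_eq[of j] suffix_eq[of j] max_pos_bounds by auto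
  qed
qed

end
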